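(* Let $K=2^m$ with $m\in\mathbb{N}$, and let $c\in\mathbb{R}^{K-1}$ be the vector with $c_i=1$ for odd $i$ and $c_i=0$ for even $i$. Suppose $a\in\mathbb{R}^{K-1}$ is written as $a=\mu c+\mu\epsilon$ with $\mu=\frac2K\|a\|_1\in\mathbb{R}$ and $\epsilon\in\mathbb{R}^{K-1}$ satisfying $\sum_i\epsilon_i=0$. Then $$\Psi e^{-\Psi a}=Ke^{-\frac{K\mu}{2}}1_{K-1}-Ke^{-\frac{K\mu}{2}}\mu\,\epsilon+2\big(e^{-K\mu}-e^{-\frac{K\mu}{2}}\big)\big(1-\mu(\Psi\epsilon)_1\big)c+O(\|\epsilon\|_1^2),$$ where the exponential is taken entrywise.
   Context: Sylvester Hadamard matrices: $\Phi_1=(1)$, $\Phi_{2^m}=\begin{bmatrix}\Phi_{2^{m-1}}&\Phi_{2^{m-1}}\\ \Phi_{2^{m-1}}&-\Phi_{2^{m-1}}\end{bmatrix}$, $\Phi=\Phi_K$. $\Psi\in\mathbb{R}^{(K-1)\times(K-1)}$ is obtained from $1_K1_K^T-\Phi$ by deleting its first row and first column, indexed $1,\dots,K-1$. $\|\epsilon\|_1=\sum_i|\epsilon_i|$. *)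

theory Defs
  imports "HOL-Analysis.Analysis"
begin

(* Sylvester Hadamard matrix Phi_{2^m}, 0-based indices i,j < 2^m:
   sylv m i j = entry in row i+1, column j+1 of Phi_{2^m} (block recursion). *)
fun sylv :: "nat \<Rightarrow> nat \<Rightarrow> nat \<Rightarrow> real" where
  "sylv 0 i j = 1"
| "sylv (Suc m) i j =
     (let h = (2::nat) ^ m in
      if i < h \<and> j < h then sylv m i j
      else if i < h then sylv m i (j - h)
      else if j < h then sylv m (i - h) j
      else - sylv m (i - h) (j - h))"

(* Psi: 1 1^T - Phi with first row and column deleted, indexed 1..K-1 *)
definition Psi :: "nat \<Rightarrow> nat \<Rightarrow> nat \<Rightarrow> real" where
  "Psi m i j = 1 - sylv m i j"

(* vectors in R^{K-1} are functions nat => real, relevant on indices 1..K-1 *)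
definition matvec :: "nat \<Rightarrow> (nat \<Rightarrow> nat \<Rightarrow> real) \<Rightarrow> (nat \<Rightarrow> real) \<Rightarrow> nat \<Rightarrow> real" where
  "matvec m M v = (\<lambda>i. \<Sum>j = 1..2^m - 1. M i j * v j)"

definition l1norm :: "nat \<Rightarrow> (nat \<Rightarrow> real) \<Rightarrow> real" where
  "l1norm m v = (\<Sum>i = 1..2^m - 1. \<bar>v i\<bar>)"

definition cvec :: "nat \<Rightarrow> real" where
  "cvec i = (if odd i then 1 else 0)"

end

theory Submission
  imports Defs
begin

text \<open>Column 1 of \<open>\<Psi>\<close> is \<open>2c\<close>, and \<open>\<Phi>\<^sup>2 = K I\<close> gives \<open>\<Psi>\<^sup>2 = K (J + I)\<close> on the
  indices \<open>1..K-1\<close>, where \<open>J\<close> is the all-ones matrix. Hence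
  \<open>\<Psi>a = (K\<mu>/2) (1 + e\<^sub>1) + u\<close> with \<open>u = \<mu>\<Psi>\<epsilon>\<close>, so \<open>exp (-\<Psi>a) = w \<circ> exp (-u)\<close> for the weights
  \<open>w\<^sub>j = exp (-K\<mu>/2)\<close> (\<open>j \<noteq> 1\<close>), \<open>w\<^sub>1 = exp (-K\<mu>)\<close>. Linearising \<open>exp (-u) = 1 - u + O(u\<^sup>2)\<close>
  and using \<open>\<Psi>1 = K1\<close> and \<open>\<Psi>\<^sup>2\<epsilon> = K\<epsilon>\<close> (as \<open>\<Sigma>\<epsilon> = 0\<close>) gives the expansion; the remainder
  is quadratic in \<open>\<parallel>\<epsilon>\<parallel>\<^sub>1\<close> because \<open>|u\<^sub>j| \<le> 2|\<mu>| \<parallel>\<epsilon>\<parallel>\<^sub>1\<close>.\<close>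

lemma abs_exp_minus_one_minus_le_square:
  fixes x :: real
  assumes "\<bar>x\<bar> \<le> 1"
  shows "\<bar>exp x - 1 - x\<bar> \<le> x\<^sup>2"
proof -
  have "exp x \<le> 1 + x + x\<^sup>2"
  proof (cases "x \<ge> 0")
    case True
    then show ?thesis using exp_bound[of x] assms by simp
  next
    case False
    have "1 - x \<le> exp (- x)" using exp_ge_add_one_self[of "- x"] by simp
    then have "exp x \<le> 1 / (1 - x)" using False by (simp add: exp_minus field_simps)
    also have "\<dots> \<le> 1 + x + x\<^sup>2"
      using False assms mult_nonpos_nonneg[of x "x * x"] by (simp add: field_simps power2_eq_square)
    finally show ?thesis .
  qed
  moreover have "0 \<le> exp x - 1 - x" using exp_ge_add_one_self[of x] by linarith
  ultimately show ?thesis by simp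
qed

lemma sum_lessThan_add_split:
  "(\<Sum>j < h + n. f j) = (\<Sum>j < h. f j) + (\<Sum>j < n. f (j + h :: nat))"
  by (induction n) (auto simp: add.commute add.left_commute)

lemma sum_one_to_minus_one:
  fixes f :: "nat \<Rightarrow> 'a::ab_group_add"
  assumes "0 < n"
  shows "(\<Sum>j = 1..n - 1. f j) = (\<Sum>j < n. f j) - f 0"
proof -
  have "{..<n} = insert 0 {1..n - 1}" using assms by auto
  then show ?thesis by simp
qed

lemma sylv_zero_left [simp]: "sylv m 0 j = 1"
  by (induction m arbitrary: j) (auto simp: Let_def)

lemma sylv_zero_right [simp]: "sylv m i 0 = 1"
  by (induction m arbitrary: i) (auto simp: Let_def)

lemma sylv_commute: "sylv m i j = sylv m j i"
  by (induction m arbitrary: i j) (auto simp: Let_def)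

lemma abs_sylv [simp]: "\<bar>sylv m i j\<bar> = 1"
  by (induction m arbitrary: i j) (auto simp: Let_def)

lemma sylv_orthogonal:
  assumes "i < 2^m" "k < 2^m"
  shows "(\<Sum>j < 2^m. sylv m i j * sylv m j k) = (if i = k then 2^m else 0)"
  using assms
proof (induction m arbitrary: i k)
  case 0
  then show ?case by simp
next
  case (Suc m)
  define h :: nat where "h = 2^m"
  have "(2::nat)^Suc m = h + h" by (simp add: h_def)
  then have split: "(\<Sum>j < 2^Suc m. sylv (Suc m) i j * sylv (Suc m) j k) =
      (\<Sum>j < h. sylv (Suc m) i j * sylv (Suc m) j k)
    + (\<Sum>j < h. sylv (Suc m) i (j + h) * sylv (Suc m) (j + h) k)"
    by (simp only: sum_lessThan_add_split)
  consider "i < h" "k < h" | "i < h" "\<not> k < h" | "\<not> i < h" "k < h" | "\<not> i < h" "\<not> k < h"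
    by blast
  then show ?case
  proof cases
    case 1
    then show ?thesis using split Suc.IH[of i k] by (simp add: h_def[symmetric] Let_def)
  next
    case 2
    then show ?thesis using split Suc.IH[of i "k - h"] Suc.prems
      by (simp add: h_def[symmetric] Let_def sum_negf)
  next
    case 3
    then show ?thesis using split Suc.IH[of "i - h" k] Suc.prems
      by (simp add: h_def[symmetric] Let_def sum_negf)
  next
    case 4
    then show ?thesis using split Suc.IH[of "i - h" "k - h"] Suc.prems
      by (auto simp: h_def[symmetric] Let_def sum_negf)
  qed
qed

lemma sylv_row_sum: "i < 2^m \<Longrightarrow> (\<Sum>j < 2^m. sylv m i j) = (if i = 0 then 2^m else 0)"
  using sylv_orthogonal[of i m 0] by simp

lemma sylv_column_sum: "k < 2^m \<Longrightarrow> (\<Sum>j < 2^m. sylv m j k) = (if k = 0 then 2^m else 0)"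
  using sylv_row_sum[of k m] by (simp add: sylv_commute)

lemma sylv_one_right:
  assumes "1 \<le> m" "j < 2^m"
  shows "sylv m j 1 = (if odd j then -1 else 1)"
  using assms
proof (induction m arbitrary: j)
  case 0
  then show ?case by simp
next
  case (Suc m)
  show ?case
  proof (cases "m = 0")
    case True
    then show ?thesis using Suc.prems by (cases j) (auto simp: Let_def)
  next
    case False
    then have "(2::nat) \<le> 2^m" "even ((2::nat)^m)"
      using power_increasing[of 1 m "2::nat"] by auto
    then show ?thesis
      using Suc.IH[of j] Suc.IH[of "j - 2^m"] Suc.prems False
      by (auto simp: Let_def even_diff_nat)
  qed
qed

lemma abs_Psi_le: "\<bar>Psi m i j\<bar> \<le> 2"
  using abs_sylv[of m i j] unfolding Psi_def by linarith

lemma Psi_one_right: "1 \<le> m \<Longrightarrow> j < 2^m \<Longrightarrow> Psi m j 1 = 2 * cvec j"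
  using sylv_one_right[of m j] by (simp add: Psi_def cvec_def)

lemma Psi_row_sum:
  assumes "i \<in> {1..2^m - 1}"
  shows "(\<Sum>j = 1..2^m - 1. Psi m i j) = 2^m"
proof -
  have "i < 2^m" "i \<noteq> 0" using assms by auto
  then have "(\<Sum>j < 2^m. Psi m i j) = 2^m"
    using sylv_row_sum[of i m] by (simp add: Psi_def sum_subtractf)
  moreover have "(\<Sum>j = 1..2^m - 1. Psi m i j) = (\<Sum>j < 2^m. Psi m i j) - Psi m i 0"
    by (rule sum_one_to_minus_one) simp
  ultimately show ?thesis by (simp add: Psi_def)
qed

lemma Psi_square:
  assumes "i \<in> {1..2^m - 1}" "k \<in> {1..2^m - 1}"
  shows "(\<Sum>j = 1..2^m - 1. Psi m i j * Psi m j k) = 2^m + (if i = k then 2^m else 0)"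
proof -
  have expand: "Psi m i j * Psi m j k = 1 - sylv m i j - sylv m j k + sylv m i j * sylv m j k" for j
    by (simp add: Psi_def algebra_simps)
  have "i < 2^m" "i \<noteq> 0" "k < 2^m" "k \<noteq> 0" using assms by auto
  then have "(\<Sum>j < 2^m. Psi m i j * Psi m j k) = 2^m + (if i = k then 2^m else 0)"
    unfolding expand using sylv_row_sum[of i m] sylv_column_sum[of k m] sylv_orthogonal[of i m k]
    by (simp add: sum.distrib sum_subtractf)
  moreover have "(\<Sum>j = 1..2^m - 1. Psi m i j * Psi m j k)
      = (\<Sum>j < 2^m. Psi m i j * Psi m j k) - Psi m i 0 * Psi m 0 k"
    by (rule sum_one_to_minus_one) simp
  ultimately show ?thesis by (simp add: Psi_def)
qed

lemma matvec_cong: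
  "(\<And>j. j \<in> {1..2^m - 1} \<Longrightarrow> v j = w j) \<Longrightarrow> matvec m M v i = matvec m M w i"
  unfolding matvec_def by (rule sum.cong) auto

lemma matvec_add: "matvec m M (\<lambda>j. v j + w j) i = matvec m M v i + matvec m M w i"
  by (simp add: matvec_def distrib_left sum.distrib)

lemma matvec_mult_const: "matvec m M (\<lambda>j. c * v j) i = c * matvec m M v i"
  by (simp add: matvec_def sum_distrib_left mult.left_commute)

lemma matvec_bump_at_one:
  assumes "1 \<le> m"
  shows "matvec m M (\<lambda>j. (x + (if j = 1 then y else 0)) * v j) i = x * matvec m M v i + y * M i 1 * v 1"
proof -
  have "1 \<in> {1..(2::nat)^m - 1}" using power_increasing[OF assms, of "2::nat"] by simp
  have "matvec m M (\<lambda>j. (x + (if j = 1 then y else 0)) * v j) i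
      = (\<Sum>j = 1..2^m - 1. x * (M i j * v j) + (if j = 1 then y * M i 1 * v 1 else 0))"
    unfolding matvec_def by (rule sum.cong) (auto simp: algebra_simps)
  with \<open>1 \<in> {1..2^m - 1}\<close> show ?thesis
    by (simp add: matvec_def sum.distrib sum_distrib_left)
qed

lemma abs_matvec_le:
  assumes "\<And>j. \<bar>M i j\<bar> \<le> B"
  shows "\<bar>matvec m M v i\<bar> \<le> B * l1norm m v"
proof -
  have "\<bar>matvec m M v i\<bar> \<le> (\<Sum>j = 1..2^m - 1. \<bar>M i j\<bar> * \<bar>v j\<bar>)"
    unfolding matvec_def abs_mult[symmetric] by (rule sum_abs)
  also have "\<dots> \<le> (\<Sum>j = 1..2^m - 1. B * \<bar>v j\<bar>)"
    by (intro sum_mono mult_right_mono assms) simp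
  finally show ?thesis by (simp add: l1norm_def sum_distrib_left)
qed

lemma matvec_Psi_cvec:
  assumes "1 \<le> m" "j \<in> {1..2^m - 1}"
  shows "matvec m (Psi m) cvec j = 2^m / 2 * (1 + (if j = 1 then 1 else 0))"
proof -
  have one: "1 \<in> {1..(2::nat)^m - 1}" using power_increasing[OF assms(1), of "2::nat"] by simp
  have "matvec m (Psi m) cvec j = (\<Sum>l = 1..2^m - 1. Psi m j l * Psi m l 1) / 2"
    unfolding matvec_def sum_divide_distrib
    by (rule sum.cong) (use Psi_one_right[OF assms(1)] in auto)
  then show ?thesis using Psi_square[OF assms(2) one] by simp
qed

lemma matvec_Psi_Psi:
  assumes "i \<in> {1..2^m - 1}" "(\<Sum>l = 1..2^m - 1. e l) = 0"
  shows "matvec m (Psi m) (matvec m (Psi m) e) i = 2^m * e i"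
proof -
  have "matvec m (Psi m) (matvec m (Psi m) e) i
      = (\<Sum>l = 1..2^m - 1. (\<Sum>j = 1..2^m - 1. Psi m i j * Psi m j l) * e l)"
    unfolding matvec_def sum_distrib_left sum_distrib_right mult.assoc by (rule sum.swap)
  also have "\<dots> = (\<Sum>l = 1..2^m - 1. 2^m * e l + (if l = i then 2^m * e i else 0))"
    by (rule sum.cong) (use Psi_square[OF assms(1)] in \<open>auto simp: distrib_right\<close>)
  also have "\<dots> = 2^m * e i"
    using assms by (simp add: sum.distrib sum_distrib_left[symmetric])
  finally show ?thesis .
qed

lemma matvec_Psi_bump_at_one:
  assumes "i \<in> {1..2^m - 1}"
  shows "matvec m (Psi m) (\<lambda>j. (x + (if j = 1 then y else 0)) * v j) i
    = x * matvec m (Psi m) v i + 2 * y * cvec i * v 1"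
proof -
  have "1 \<le> m" using assms by (cases m) auto
  moreover have "i < 2^m" using assms by auto
  ultimately show ?thesis using matvec_bump_at_one[of m "Psi m" x y v i] Psi_one_right[of m i] by simp
qed

lemma matvec_Psi_cvec_plus:
  assumes "j \<in> {1..2^m - 1}" "\<forall>l\<in>{1..2^m - 1}. a l = \<mu> * cvec l + \<mu> * \<epsilon> l"
  shows "matvec m (Psi m) a j
    = 2^m * \<mu> / 2 * (1 + (if j = 1 then 1 else 0)) + \<mu> * matvec m (Psi m) \<epsilon> j"
proof -
  have "1 \<le> m" using assms(1) by (cases m) auto
  have "matvec m (Psi m) a j = \<mu> * matvec m (Psi m) cvec j + \<mu> * matvec m (Psi m) \<epsilon> j"
    using assms(2) matvec_cong[of m a "\<lambda>l. \<mu> * cvec l + \<mu> * \<epsilon> l"]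
    by (simp add: matvec_add matvec_mult_const)
  then show ?thesis using matvec_Psi_cvec[OF \<open>1 \<le> m\<close> assms(1)] by simp
qed

lemma matvec_exp_linearization:
  assumes "\<And>j. \<bar>M i j\<bar> \<le> B" "\<And>j. \<bar>w j\<bar> \<le> W" "\<And>j. \<bar>u j\<bar> \<le> b" "b \<le> 1"
  shows "\<bar>matvec m M (\<lambda>j. w j * exp (- u j)) i - matvec m M w i + matvec m M (\<lambda>j. w j * u j) i\<bar>
    \<le> real (2^m - 1) * B * W * b\<^sup>2"
proof -
  define r where "r j = exp (- u j) - 1 + u j" for j
  have r_bound: "\<bar>r j\<bar> \<le> b\<^sup>2" for j
  proof -
    have "\<bar>r j\<bar> \<le> (u j)\<^sup>2"
      using abs_exp_minus_one_minus_le_square[of "- u j"] assms(3)[of j] assms(4) by (simp add: r_def)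
    also have "\<dots> \<le> b\<^sup>2"
      using assms(3)[of j] by (simp add: abs_le_square_iff[symmetric] power2_abs)
    finally show ?thesis .
  qed
  have "matvec m M (\<lambda>j. w j * exp (- u j)) i - matvec m M w i + matvec m M (\<lambda>j. w j * u j) i
      = matvec m M (\<lambda>j. w j * r j) i"
    unfolding matvec_def by (simp add: r_def algebra_simps sum.distrib sum_subtractf)
  also have "\<bar>\<dots>\<bar> \<le> (\<Sum>j = 1..2^m - 1. \<bar>M i j\<bar> * (\<bar>w j\<bar> * \<bar>r j\<bar>))"
    unfolding matvec_def abs_mult[symmetric] by (rule sum_abs)
  also have "\<dots> \<le> (\<Sum>j = 1..(2::nat)^m - 1. B * (W * b\<^sup>2))"
    using assms(1,2) r_bound by (intro sum_mono mult_mono) (auto intro: order_trans[OF abs_ge_zero])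
  finally show ?thesis by (simp add: mult.assoc)
qed

lemma Psi_exp_Psi_expansion:
  fixes \<mu> :: real and a \<epsilon> :: "nat \<Rightarrow> real"
  assumes i: "i \<in> {1..2^m - 1}"
    and a: "\<forall>j\<in>{1..2^m - 1}. a j = \<mu> * cvec j + \<mu> * \<epsilon> j"
    and \<epsilon>_sum: "(\<Sum>j = 1..2^m - 1. \<epsilon> j) = 0"
    and small: "2 * \<bar>\<mu>\<bar> * l1norm m \<epsilon> \<le> 1"
  shows "\<bar>matvec m (Psi m) (\<lambda>j. exp (- matvec m (Psi m) a j)) i
           - ( real (2^m) * exp (- real (2^m) * \<mu> / 2)
               - real (2^m) * exp (- real (2^m) * \<mu> / 2) * \<mu> * \<epsilon> i
               + 2 * (exp (- real (2^m) * \<mu>) - exp (- real (2^m) * \<mu> / 2))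
                   * (1 - \<mu> * matvec m (Psi m) \<epsilon> 1) * cvec i)\<bar>
    \<le> 8 * real (2^m - 1) * exp (real (2^m) * \<bar>\<mu>\<bar>) * \<mu>\<^sup>2 * (l1norm m \<epsilon>)\<^sup>2"
proof -
  define K where "K = real (2^m)"
  define E1 where "E1 = exp (- K * \<mu>)"
  define E2 where "E2 = exp (- K * \<mu> / 2)"
  define u where "u j = \<mu> * matvec m (Psi m) \<epsilon> j" for j
  define w where "w j = E2 + (if j = 1 then E1 - E2 else 0)" for j :: nat
  have exp_Psi_a: "exp (- matvec m (Psi m) a j) = w j * exp (- u j)" if "j \<in> {1..2^m - 1}" for j
    using matvec_Psi_cvec_plus[OF that a]
    by (simp add: w_def E1_def E2_def u_def K_def exp_add[symmetric] algebra_simps)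
  have Psi_w: "matvec m (Psi m) w i = K * E2 + 2 * (E1 - E2) * cvec i"
  proof -
    have "matvec m (Psi m) (\<lambda>_. 1) i = K"
      using Psi_row_sum[OF i] by (simp add: matvec_def K_def)
    then show ?thesis
      using matvec_Psi_bump_at_one[OF i, of E2 "E1 - E2" "\<lambda>_. 1"]
      by (simp add: w_def[abs_def] algebra_simps)
  qed
  have Psi_wu: "matvec m (Psi m) (\<lambda>j. w j * u j) i
    = K * E2 * \<mu> * \<epsilon> i + 2 * (E1 - E2) * cvec i * (\<mu> * matvec m (Psi m) \<epsilon> 1)"
  proof -
    have "matvec m (Psi m) u i = \<mu> * (K * \<epsilon> i)"
      using matvec_Psi_Psi[OF i \<epsilon>_sum] matvec_mult_const[of m "Psi m" \<mu> "matvec m (Psi m) \<epsilon>" i]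
      by (simp add: u_def[abs_def] K_def)
    then show ?thesis
      using matvec_Psi_bump_at_one[OF i, of E2 "E1 - E2" u]
      by (simp add: w_def[abs_def] u_def algebra_simps)
  qed
  have u_bound: "\<bar>u j\<bar> \<le> 2 * \<bar>\<mu>\<bar> * l1norm m \<epsilon>" for j
    using mult_left_mono[OF abs_matvec_le[of "Psi m" j 2 m \<epsilon>, OF abs_Psi_le], of "\<bar>\<mu>\<bar>"]
    by (simp add: u_def abs_mult)
  have w_bound: "\<bar>w j\<bar> \<le> exp (K * \<bar>\<mu>\<bar>)" for j
  proof -
    have "K * (- \<mu>) \<le> K * \<bar>\<mu>\<bar>" by (rule mult_left_mono) (auto simp: K_def)
    moreover have "0 \<le> K * \<bar>\<mu>\<bar>" by (simp add: K_def)
    ultimately show ?thesis by (simp add: w_def E1_def E2_def)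
  qed
  have lin: "\<bar>matvec m (Psi m) (\<lambda>j. w j * exp (- u j)) i - matvec m (Psi m) w i
      + matvec m (Psi m) (\<lambda>j. w j * u j) i\<bar>
    \<le> real (2^m - 1) * 2 * exp (K * \<bar>\<mu>\<bar>) * (2 * \<bar>\<mu>\<bar> * l1norm m \<epsilon>)\<^sup>2"
    by (rule matvec_exp_linearization[OF abs_Psi_le w_bound u_bound small])
  have "matvec m (Psi m) (\<lambda>j. exp (- matvec m (Psi m) a j)) i
      = matvec m (Psi m) (\<lambda>j. w j * exp (- u j)) i"
    by (rule matvec_cong) (rule exp_Psi_a)
  with lin[unfolded Psi_w Psi_wu] show ?thesis
    by (simp add: K_def E1_def E2_def power_mult_distrib algebra_simps)
qed

theorem lemmaD9:
  fixes m :: nat and \<mu> :: real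
  shows "\<exists>C \<delta>. \<delta> > 0 \<and>
    (\<forall>(a::nat \<Rightarrow> real) (\<epsilon>::nat \<Rightarrow> real).
       (\<forall>i\<in>{1..2^m - 1}. a i = \<mu> * cvec i + \<mu> * \<epsilon> i) \<and>
       \<mu> = 2 / real (2^m) * l1norm m a \<and>
       (\<Sum>i = 1..2^m - 1. \<epsilon> i) = 0 \<and>
       l1norm m \<epsilon> < \<delta> \<longrightarrow>
       (\<forall>i\<in>{1..2^m - 1}.
          \<bar>matvec m (Psi m) (\<lambda>j. exp (- matvec m (Psi m) a j)) i
           - ( real (2^m) * exp (- real (2^m) * \<mu> / 2)
               - real (2^m) * exp (- real (2^m) * \<mu> / 2) * \<mu> * \<epsilon> i
               + 2 * (exp (- real (2^m) * \<mu>) - exp (- real (2^m) * \<mu> / 2))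
                   * (1 - \<mu> * matvec m (Psi m) \<epsilon> 1) * cvec i)\<bar>
          \<le> C * (l1norm m \<epsilon>)\<^sup>2))"
proof -
  define \<delta> :: real where "\<delta> = 1 / (2 * \<bar>\<mu>\<bar> + 1)"
  have "\<delta> > 0" by (simp add: \<delta>_def add_pos_nonneg)
  moreover have "2 * \<bar>\<mu>\<bar> * L \<le> 1" if "L < \<delta>" for L
  proof -
    have "2 * \<bar>\<mu>\<bar> * L \<le> 2 * \<bar>\<mu>\<bar> * \<delta>" using that by (simp add: mult_left_mono)
    also have "\<dots> \<le> 1" by (simp add: \<delta>_def field_simps)
    finally show ?thesis .
  qed
  ultimately show ?thesis
    using Psi_exp_Psi_expansion[of _ m _ \<mu>] by blast
qed

end
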